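(* Let $n\geqslant 2^{32}$ be an integer and let $\mathcal{A}\subseteq\{0,1\}^{\binom{[n]}{2}}$ be isomorphic invariant. Then there exists a nonnegative parameter $\gamma(\mathcal{A})$ with \[ \gamma(\mathcal{A})\geqslant\mu(\mathcal{A})^4-\frac{21\sqrt2}{\sqrt{\log_2 n}} \] such that for every $U=\{i<j<k<\ell\}\in\binom{[n]}{4}$, \[ \mathbf{P}\big(W:\ W\cup\{\{i,k\}\},\,W\cup\{\{i,\ell\}\},\,W\cup\{\{j,k\}\},\,W\cup\{\{j,\ell\}\}\in\mathcal{A}\big)=\gamma(\mathcal{A}), \] where $\mathbf{P}$ denotes the uniform probability measure on $\{0,1\}^{\binom{[n]}{2}\setminus\binom{U}{2}}$.
   Context: Graphs on $[n]=\{1,\dots,n\}$ are identified with subsets of $\binom{[n]}{2}$ and subsets of a finite set $I$ with elements of $\{0,1\}^I$. $\mu$ is the uniform probability measure on $\{0,1\}^{\binom{[n]}{2}}$. $\mathcal{A}$ is isomorphic invariant if for every permutation $\pi$ of $[n]$ and every $G\subseteq\binom{[n]}{2}$, $G\in\mathcal{A}$ iff $\{\pi(e):e\in G\}\in\mathcal{A}$. *)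

theory Defs
  imports Complex_Main
begin

definition edges :: "nat \<Rightarrow> nat set set" where
  "edges n = {e. e \<subseteq> {1..n} \<and> card e = 2}"

definition pairs :: "nat set \<Rightarrow> nat set set" where
  "pairs U = {e. e \<subseteq> U \<and> card e = 2}"

definition iso_invariant :: "nat \<Rightarrow> nat set set set \<Rightarrow> bool" where
  "iso_invariant n A \<longleftrightarrow>
     (\<forall>\<pi> G. bij_betw \<pi> {1..n} {1..n} \<longrightarrow> G \<subseteq> edges n \<longrightarrow>
        (G \<in> A \<longleftrightarrow> (\<lambda>e. \<pi> ` e) ` G \<in> A))"

definition mu :: "nat \<Rightarrow> nat set set set \<Rightarrow> real" where
  "mu n A = real (card (A \<inter> Pow (edges n))) / 2 ^ card (edges n)"

definition unif_prob :: "'a set \<Rightarrow> ('a set \<Rightarrow> bool) \<Rightarrow> real" where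
  "unif_prob S P = real (card {W. W \<subseteq> S \<and> P W}) / 2 ^ card S"

end

theory Submission
  imports Defs "HOL-Analysis.Convex"
begin

text \<open>
  Call \<open>(a, b, c, d)\<close> a pattern of a graph \<open>W\<close> if \<open>ab\<close> and \<open>cd\<close> are non-edges of \<open>W\<close> and the
  four graphs \<open>W + ac\<close>, \<open>W + ad\<close>, \<open>W + bc\<close>, \<open>W + bd\<close> lie in \<open>A\<close>. The event of the theorem says
  that \<open>(i, j, k, l)\<close> is a pattern of a graph avoiding the six pairs of \<open>U\<close>. By isomorphism
  invariance its probability \<open>\<gamma>\<close> does not depend on \<open>U\<close>, so the number of patterns, summed
  over all graphs \<open>W\<close>, is at most \<open>n^4 2^|E| \<gamma> / 64\<close>.

  A graph whose non-edges are quasirandom has many patterns: if every vertex set \<open>X\<close> spans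
  \<open>|X|^2/2 + O(\<Delta>)\<close> ordered non-adjacent pairs, two applications of Cauchy-Schwarz give at
  least \<open>p^4 / (4 n^4) - O(n^2 \<Delta>)\<close> patterns, where \<open>p\<close> is the number of ordered pairs \<open>(a, c)\<close>
  with \<open>W + ac \<in> A\<close>. The discrepancy \<open>\<Delta>\<close> is controlled by the number of signed 4-cycles of the
  +1/-1 adjacency matrix of \<open>W\<close>, whose average over all graphs is \<open>O(n^3)\<close>, and the average of
  \<open>p\<close> is about \<open>\<mu>(A) n^2 / 2\<close> because the number of edges of a uniformly random graph is
  concentrated. Averaging over \<open>W\<close> with the power mean inequality yields
  \<open>\<gamma> \<ge> \<mu>(A)^4 - O(n^(-1/4))\<close>.
\<close>

lemma sum_Pow_insert:
  assumes "finite E" "e \<notin> E"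
  shows "(\<Sum>W\<in>Pow (insert e E). f W) = (\<Sum>W\<in>Pow E. f W + f (insert e W))"
proof -
  have "inj_on (insert e) (Pow E)"
    using assms(2) by (intro inj_onI) (metis PowD insert_ident subsetD)
  then have "(\<Sum>W\<in>insert e ` Pow E. f W) = (\<Sum>W\<in>Pow E. f (insert e W))"
    by (simp add: sum.reindex)
  moreover have "Pow E \<inter> insert e ` Pow E = {}"
    using assms(2) by auto
  ultimately show ?thesis
    unfolding Pow_insert using assms(1) by (simp add: sum.union_disjoint sum.distrib)
qed

lemma sum_Pow_sign_mult_eq_0:
  assumes "finite E" "e \<in> E" and g: "\<And>W. g (insert e W) = g (W - {e})"
  shows "(\<Sum>W\<in>Pow E. (if e \<in> W then 1 else -1) * g W) = (0::real)"
proof -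
  have E: "E = insert e (E - {e})"
    using assms(2) by blast
  have "g (insert e W) = g W" if "W \<in> Pow (E - {e})" for W
    using g[of W] that by (simp add: Diff_insert_absorb subset_Diff_insert)
  then show ?thesis
    by (subst E, subst sum_Pow_insert) (use assms(1) in \<open>auto intro!: sum.neutral\<close>)
qed

lemma card_Pow_insert_mem:
  assumes "finite E" "e \<in> E" "A \<subseteq> Pow E"
  shows "card {W\<in>Pow E. e \<notin> W \<and> insert e W \<in> A} = card {G\<in>A. e \<in> G}"
  using assms
  by (intro bij_betw_same_card[of "insert e"] bij_betw_byWitness[where f' = "\<lambda>G. G - {e}"])
    (auto simp: insert_absorb)

lemma sum_Pow_le_card:
  assumes "finite E" "\<And>W. \<bar>f W\<bar> \<le> (1::real)"
  shows "(\<Sum>W\<in>Pow E. f W) \<le> 2 ^ card E"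
proof -
  have "(\<Sum>W\<in>Pow E. f W) \<le> (\<Sum>W\<in>Pow E. 1)"
    using assms(2) by (intro sum_mono) (simp add: abs_le_iff)
  then show ?thesis
    using assms(1) by (simp add: card_Pow)
qed

lemma card_filter_eq_sum_of_bool: "finite V \<Longrightarrow> real (card {a\<in>V. P a}) = (\<Sum>a\<in>V. of_bool (P a))"
  by (simp add: Int_def)

lemma sum_swap_pairs:
  "(\<Sum>a\<in>A. \<Sum>b\<in>B. \<Sum>c\<in>C. \<Sum>d\<in>D. f a b c d) = (\<Sum>c\<in>C. \<Sum>d\<in>D. \<Sum>a\<in>A. \<Sum>b\<in>B. f a b c d)"
proof -
  have "(\<Sum>a\<in>A. \<Sum>b\<in>B. \<Sum>c\<in>C. \<Sum>d\<in>D. f a b c d) = (\<Sum>a\<in>A. \<Sum>c\<in>C. \<Sum>b\<in>B. \<Sum>d\<in>D. f a b c d)"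
    by (rule sum.cong[OF refl], rule sum.swap)
  also have "\<dots> = (\<Sum>a\<in>A. \<Sum>c\<in>C. \<Sum>d\<in>D. \<Sum>b\<in>B. f a b c d)"
    by (rule sum.cong[OF refl], rule sum.cong[OF refl], rule sum.swap)
  also have "\<dots> = (\<Sum>c\<in>C. \<Sum>a\<in>A. \<Sum>d\<in>D. \<Sum>b\<in>B. f a b c d)"
    by (rule sum.swap)
  also have "\<dots> = (\<Sum>c\<in>C. \<Sum>d\<in>D. \<Sum>a\<in>A. \<Sum>b\<in>B. f a b c d)"
    by (rule sum.cong[OF refl], rule sum.swap)
  finally show ?thesis .
qed

lemma sum_pow4_le:
  fixes y :: "'a \<Rightarrow> real"
  shows "(\<Sum>x\<in>P. y x) ^ 4 \<le> real (card P) ^ 3 * (\<Sum>x\<in>P. y x ^ 4)"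
proof -
  have "(\<Sum>x\<in>P. y x) ^ 4 = ((\<Sum>x\<in>P. y x) ^ 2) ^ 2"
    by simp
  also have "\<dots> \<le> ((\<Sum>x\<in>P. y x ^ 2) * card P) ^ 2"
    by (intro power_mono sum_squared_le_sum_of_squares) simp
  also have "\<dots> = (\<Sum>x\<in>P. y x ^ 2) ^ 2 * card P ^ 2"
    by (simp add: power_mult_distrib)
  also have "\<dots> \<le> ((\<Sum>x\<in>P. (y x ^ 2) ^ 2) * card P) * card P ^ 2"
    by (intro mult_right_mono sum_squared_le_sum_of_squares) simp
  also have "\<dots> = real (card P) ^ 3 * (\<Sum>x\<in>P. y x ^ 4)"
    by (simp add: power2_eq_square power3_eq_cube power4_eq_xxxx mult_ac)
  finally show ?thesis .
qed

lemma sum_pow4_ge: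
  fixes y :: "'a \<Rightarrow> real"
  assumes "finite P" "0 \<le> s" "real (card P) * s \<le> (\<Sum>x\<in>P. y x)"
  shows "real (card P) * s ^ 4 \<le> (\<Sum>x\<in>P. y x ^ 4)"
proof (cases "P = {}")
  case False
  then have K: "real (card P) > 0"
    using assms(1) by (simp add: card_gt_0_iff)
  have "real (card P) ^ 3 * (real (card P) * s ^ 4) = (real (card P) * s) ^ 4"
    by (simp add: power_mult_distrib power3_eq_cube power4_eq_xxxx mult_ac)
  also have "\<dots> \<le> (\<Sum>x\<in>P. y x) ^ 4"
    using assms(2,3) by (intro power_mono) auto
  also have "\<dots> \<le> real (card P) ^ 3 * (\<Sum>x\<in>P. y x ^ 4)"
    by (rule sum_pow4_le)
  finally show ?thesis
    using K by simp
qed simp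

section \<open>Signed adjacency\<close>

lemma pair_mem_pairs: "{a, b} \<in> pairs V \<longleftrightarrow> a \<noteq> b \<and> a \<in> V \<and> b \<in> V"
  by (auto simp: pairs_def card_insert_if)

lemma finite_pairs: "finite V \<Longrightarrow> finite (pairs V)"
  unfolding pairs_def by (rule finite_subset[of _ "Pow V"]) auto

definition sign_adj :: "'a set set \<Rightarrow> 'a \<Rightarrow> 'a \<Rightarrow> real" where
  "sign_adj W a b = (if a = b then 0 else if {a, b} \<in> W then 1 else -1)"

lemma abs_sign_adj_le: "\<bar>sign_adj W a b\<bar> \<le> 1"
  by (simp add: sign_adj_def)

lemma sign_adj_insert_other: "{a, b} \<noteq> e \<Longrightarrow> sign_adj (insert e W) a b = sign_adj (W - {e}) a b"
  by (auto simp: sign_adj_def)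

lemma sum_Pow_sign_adj_mult2_eq_0:
  assumes "finite V" "a \<in> V" "c \<in> V" "{a, c} \<noteq> {a', c'}"
  shows "(\<Sum>W\<in>Pow (pairs V). sign_adj W a c * sign_adj W a' c') = 0"
proof (cases "a = c")
  case False
  have "(\<Sum>W\<in>Pow (pairs V). (if {a, c} \<in> W then 1 else -1) * sign_adj W a' c') = 0"
    using assms False
    by (intro sum_Pow_sign_mult_eq_0) (auto simp: finite_pairs pair_mem_pairs sign_adj_insert_other)
  then show ?thesis
    using False by (simp add: sign_adj_def)
qed (simp add: sign_adj_def)

lemma sum_Pow_sign_adj_mult4_eq_0:
  assumes "finite V" "a \<in> V" "b \<in> V" "a \<noteq> a'" "b \<noteq> b'"
  shows "(\<Sum>W\<in>Pow (pairs V). sign_adj W a b * sign_adj W a b' * sign_adj W a' b * sign_adj W a' b') = 0"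
proof (cases "a = b \<or> a = b' \<or> a' = b")
  case False
  have "{a, b'} \<noteq> {a, b}" "{a', b} \<noteq> {a, b}" "{a', b'} \<noteq> {a, b}"
    using assms False by (auto simp: doubleton_eq_iff)
  then have "(\<Sum>W\<in>Pow (pairs V). (if {a, b} \<in> W then 1 else -1) *
               (sign_adj W a b' * sign_adj W a' b * sign_adj W a' b')) = 0"
    using assms False
    by (intro sum_Pow_sign_mult_eq_0) (auto simp: finite_pairs pair_mem_pairs sign_adj_insert_other)
  then show ?thesis
    using False by (simp add: sign_adj_def mult_ac)
qed (auto simp: sign_adj_def)

definition signed_c4 :: "'a set \<Rightarrow> 'a set set \<Rightarrow> real" where
  "signed_c4 V W = (\<Sum>b\<in>V. \<Sum>b'\<in>V. (\<Sum>a\<in>V. sign_adj W a b * sign_adj W a b') ^ 2)"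

lemma sum_Pow_signed_c4_le:
  assumes "finite V"
  shows "(\<Sum>W\<in>Pow (pairs V). signed_c4 V W) \<le> 2 ^ card (pairs V) * (2 * real (card V) ^ 3)"
proof -
  let ?P = "Pow (pairs V)" and ?K = "(2::real) ^ card (pairs V)"
  define t where
    "t W a a' b b' = sign_adj W a b * sign_adj W a b' * sign_adj W a' b * sign_adj W a' b'"
    for W :: "nat set set" and a a' b b'
  have "(\<Sum>W\<in>?P. signed_c4 V W) = (\<Sum>b\<in>V. \<Sum>b'\<in>V. \<Sum>a\<in>V. \<Sum>a'\<in>V. \<Sum>W\<in>?P. t W a a' b b')"
    unfolding signed_c4_def t_def power2_eq_square
    by (simp add: sum_product mult_ac sum.swap[of _ ?P])
  also have "\<dots> \<le> (\<Sum>b\<in>V. \<Sum>b'\<in>V. \<Sum>a\<in>V. \<Sum>a'\<in>V. ?K * (of_bool (a = a') + of_bool (b = b')))"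
  proof (intro sum_mono)
    fix b b' a a' assume "b \<in> V" "a \<in> V"
    show "(\<Sum>W\<in>?P. t W a a' b b') \<le> ?K * (of_bool (a = a') + of_bool (b = b'))"
    proof (cases "a = a' \<or> b = b'")
      case True
      have "(\<Sum>W\<in>?P. t W a a' b b') \<le> ?K * 1"
        unfolding t_def using assms
        by (simp, intro sum_Pow_le_card) (auto simp: finite_pairs abs_mult intro!: mult_le_one abs_sign_adj_le)
      also have "\<dots> \<le> ?K * (of_bool (a = a') + of_bool (b = b'))"
        using True by (intro mult_left_mono) auto
      finally show ?thesis .
    next
      case False
      then have "(\<Sum>W\<in>?P. t W a a' b b') = 0"
        unfolding t_def using assms \<open>b \<in> V\<close> \<open>a \<in> V\<close> by (intro sum_Pow_sign_adj_mult4_eq_0) auto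
      then show ?thesis
        by simp
    qed
  qed
  also have "\<dots> = ?K * (2 * real (card V) ^ 3)"
  proof -
    have "(\<Sum>b\<in>V. \<Sum>b'\<in>V. \<Sum>a\<in>V. \<Sum>a'\<in>V. of_bool (a = a') + of_bool (b = b') :: real)
          = 2 * real (card V) ^ 3"
      using assms by (simp add: sum.distrib sum_distrib_left[symmetric] sum_distrib_right[symmetric] power3_eq_cube)
    then show ?thesis
      by (simp only: sum_distrib_left[symmetric])
  qed
  finally show ?thesis .
qed

lemma sum_Pow_signed_sum_sq_le:
  assumes "finite V"
  shows "(\<Sum>W\<in>Pow (pairs V). (\<Sum>a\<in>V. \<Sum>c\<in>V. sign_adj W a c) ^ 2)
           \<le> 2 ^ card (pairs V) * (2 * real (card V) ^ 2)"
proof -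
  let ?P = "Pow (pairs V)" and ?K = "(2::real) ^ card (pairs V)"
  have "(\<Sum>W\<in>?P. (\<Sum>a\<in>V. \<Sum>c\<in>V. sign_adj W a c) ^ 2)
        = (\<Sum>a\<in>V. \<Sum>a'\<in>V. \<Sum>c\<in>V. \<Sum>c'\<in>V. \<Sum>W\<in>?P. sign_adj W a c * sign_adj W a' c')"
    unfolding power2_eq_square by (simp add: sum_product sum.swap[of _ ?P])
  also have "\<dots> \<le> (\<Sum>a\<in>V. \<Sum>a'\<in>V. \<Sum>c\<in>V. \<Sum>c'\<in>V.
                    ?K * (of_bool (a' = a \<and> c' = c) + of_bool (a' = c \<and> c' = a)))"
  proof (intro sum_mono)
    fix a a' c c' assume "a \<in> V" "c \<in> V"
    show "(\<Sum>W\<in>?P. sign_adj W a c * sign_adj W a' c')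
          \<le> ?K * (of_bool (a' = a \<and> c' = c) + of_bool (a' = c \<and> c' = a))"
    proof (cases "{a, c} = {a', c'}")
      case True
      have "(\<Sum>W\<in>?P. sign_adj W a c * sign_adj W a' c') \<le> ?K * 1"
        using assms
        by (simp, intro sum_Pow_le_card) (auto simp: finite_pairs abs_mult intro!: mult_le_one abs_sign_adj_le)
      also have "\<dots> \<le> ?K * (of_bool (a' = a \<and> c' = c) + of_bool (a' = c \<and> c' = a))"
        using True by (intro mult_left_mono) (auto simp: doubleton_eq_iff)
      finally show ?thesis .
    next
      case False
      then have "(\<Sum>W\<in>?P. sign_adj W a c * sign_adj W a' c') = 0"
        using assms \<open>a \<in> V\<close> \<open>c \<in> V\<close> by (intro sum_Pow_sign_adj_mult2_eq_0)
      then show ?thesis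
        by simp
    qed
  qed
  also have "\<dots> = ?K * (2 * real (card V) ^ 2)"
  proof -
    have "(\<Sum>a\<in>V. \<Sum>a'\<in>V. \<Sum>c\<in>V. \<Sum>c'\<in>V.
            of_bool (a' = a \<and> c' = c) + of_bool (a' = c \<and> c' = a) :: real) = 2 * real (card V) ^ 2"
      using assms by (simp add: sum.distrib of_bool_conj sum_distrib_left[symmetric] sum_distrib_right[symmetric] power2_eq_square)
    then show ?thesis
      by (simp only: sum_distrib_left[symmetric])
  qed
  finally show ?thesis .
qed

lemma sum_Pow_abs_signed_sum_le:
  assumes "finite V"
  shows "(\<Sum>W\<in>Pow (pairs V). \<bar>\<Sum>a\<in>V. \<Sum>c\<in>V. sign_adj W a c\<bar>) \<le> 2 * (2 ^ card (pairs V) * real (card V))"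
proof -
  let ?P = "Pow (pairs V)" and ?K = "(2::real) ^ card (pairs V)" and ?n = "real (card V)"
  have "(\<Sum>W\<in>?P. \<bar>\<Sum>a\<in>V. \<Sum>c\<in>V. sign_adj W a c\<bar>) ^ 2
        \<le> (\<Sum>W\<in>?P. \<bar>\<Sum>a\<in>V. \<Sum>c\<in>V. sign_adj W a c\<bar> ^ 2) * card ?P"
    by (rule sum_squared_le_sum_of_squares)
  also have "\<dots> = (\<Sum>W\<in>?P. (\<Sum>a\<in>V. \<Sum>c\<in>V. sign_adj W a c) ^ 2) * ?K"
    using assms by (simp add: card_Pow finite_pairs)
  also have "\<dots> \<le> ?K * (2 * ?n ^ 2) * ?K"
    using sum_Pow_signed_sum_sq_le[OF assms] by (intro mult_right_mono) auto
  also have "\<dots> \<le> (2 * (?K * ?n)) ^ 2"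
    by (simp add: power2_eq_square)
  finally show ?thesis
    by (rule power2_le_imp_le) simp
qed

section \<open>Discrepancy of the non-edges\<close>

definition pair_count :: "('a \<Rightarrow> 'a \<Rightarrow> bool) \<Rightarrow> 'a set \<Rightarrow> real" where
  "pair_count R X = (\<Sum>a\<in>X. \<Sum>b\<in>X. of_bool (R a b))"

definition adj :: "'a set set \<Rightarrow> 'a \<Rightarrow> 'a \<Rightarrow> bool" where
  "adj W a b \<longleftrightarrow> a \<noteq> b \<and> {a, b} \<in> W"

definition nonadj :: "'a set set \<Rightarrow> 'a \<Rightarrow> 'a \<Rightarrow> bool" where
  "nonadj W a b \<longleftrightarrow> a \<noteq> b \<and> {a, b} \<notin> W"

lemma sum_sum_of_bool_neq:
  assumes "finite X"
  shows "(\<Sum>a\<in>X. \<Sum>b\<in>X. of_bool (a \<noteq> b) :: real) = real (card X) ^ 2 - real (card X)"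
proof -
  have "(\<Sum>b\<in>X. of_bool (a \<noteq> b) :: real) = real (card X) - 1" if "a \<in> X" for a
  proof -
    have "X \<inter> {b. a \<noteq> b} = X - {a}"
      by blast
    moreover have "card X \<ge> 1"
      using assms that by (auto simp: Suc_le_eq card_gt_0_iff)
    ultimately show ?thesis
      using assms that by (simp add: of_nat_diff)
  qed
  then have "(\<Sum>a\<in>X. \<Sum>b\<in>X. of_bool (a \<noteq> b) :: real) = (\<Sum>a\<in>X. real (card X) - 1)"
    by (rule sum.cong[OF refl])
  then show ?thesis
    by (simp add: power2_eq_square algebra_simps)
qed

lemma pair_count_adj:
  assumes "finite X"
  shows "pair_count (adj W) X
           = (real (card X) ^ 2 - real (card X) + (\<Sum>a\<in>X. \<Sum>b\<in>X. sign_adj W a b)) / 2"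
proof -
  have "pair_count (adj W) X = (\<Sum>a\<in>X. \<Sum>b\<in>X. (of_bool (a \<noteq> b) + sign_adj W a b) / 2)"
    unfolding pair_count_def adj_def by (intro sum.cong refl) (simp add: sign_adj_def)
  also have "\<dots> = ((\<Sum>a\<in>X. \<Sum>b\<in>X. of_bool (a \<noteq> b)) + (\<Sum>a\<in>X. \<Sum>b\<in>X. sign_adj W a b)) / 2"
    by (simp add: sum.distrib flip: sum_divide_distrib)
  finally show ?thesis
    using sum_sum_of_bool_neq[OF assms] by simp
qed

lemma pair_count_nonadj:
  assumes "finite X"
  shows "pair_count (nonadj W) X
           = (real (card X) ^ 2 - real (card X) - (\<Sum>a\<in>X. \<Sum>b\<in>X. sign_adj W a b)) / 2"
proof -
  have "pair_count (nonadj W) X = (\<Sum>a\<in>X. \<Sum>b\<in>X. (of_bool (a \<noteq> b) - sign_adj W a b) / 2)"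
    unfolding pair_count_def nonadj_def by (intro sum.cong refl) (simp add: sign_adj_def)
  also have "\<dots> = ((\<Sum>a\<in>X. \<Sum>b\<in>X. of_bool (a \<noteq> b)) - (\<Sum>a\<in>X. \<Sum>b\<in>X. sign_adj W a b)) / 2"
    by (simp add: sum_subtractf flip: sum_divide_distrib)
  finally show ?thesis
    using sum_sum_of_bool_neq[OF assms] by simp
qed

lemma sum_sum_pow4_le:
  fixes s :: "'a \<Rightarrow> 'a \<Rightarrow> real"
  assumes "finite V" "X \<subseteq> V"
  shows "(\<Sum>a\<in>X. \<Sum>b\<in>X. s a b) ^ 4
           \<le> real (card V) ^ 4 * (\<Sum>b\<in>V. \<Sum>b'\<in>V. (\<Sum>a\<in>V. s a b * s a b') ^ 2)"
proof -
  let ?n = "real (card V)"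
  define c where "c b b' = (\<Sum>a\<in>V. s a b * s a b')" for b b'
  define Y where "Y = (\<Sum>a\<in>V. (\<Sum>b\<in>X. s a b) ^ 2)"
  have card_X: "real (card X) \<le> ?n"
    using assms by (simp add: card_mono)
  have "(\<Sum>a\<in>X. \<Sum>b\<in>X. s a b) ^ 2 \<le> (\<Sum>a\<in>X. (\<Sum>b\<in>X. s a b) ^ 2) * card X"
    by (rule sum_squared_le_sum_of_squares)
  also have "\<dots> \<le> Y * ?n"
    unfolding Y_def using assms card_X
    by (intro mult_mono sum_mono2) (auto simp: sum_nonneg finite_subset)
  finally have S_sq: "(\<Sum>a\<in>X. \<Sum>b\<in>X. s a b) ^ 2 \<le> Y * ?n" .
  have "Y = (\<Sum>(b, b')\<in>X \<times> X. c b b')"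
    unfolding Y_def c_def power2_eq_square
    by (simp add: sum_product sum.cartesian_product[symmetric] sum.swap[of _ V] sum_distrib_left mult_ac)
  then have "Y ^ 2 \<le> (\<Sum>(b, b')\<in>X \<times> X. (c b b') ^ 2) * card (X \<times> X)"
    using sum_squared_le_sum_of_squares[of "case_prod c"] by (simp add: case_prod_beta)
  also have "\<dots> \<le> (\<Sum>(b, b')\<in>V \<times> V. (c b b') ^ 2) * ?n ^ 2"
  proof (intro mult_mono sum_mono2)
    show "real (card (X \<times> X)) \<le> ?n ^ 2"
      using card_X by (simp add: card_cartesian_product power2_eq_square mult_mono)
  qed (use assms in \<open>auto intro: sum_nonneg\<close>)
  finally have Y_sq: "Y ^ 2 \<le> ?n ^ 2 * (\<Sum>b\<in>V. \<Sum>b'\<in>V. (c b b') ^ 2)"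
    by (simp add: sum.cartesian_product mult.commute)
  have "(\<Sum>a\<in>X. \<Sum>b\<in>X. s a b) ^ 4 = ((\<Sum>a\<in>X. \<Sum>b\<in>X. s a b) ^ 2) ^ 2"
    by simp
  also have "\<dots> \<le> (Y * ?n) ^ 2"
    using S_sq by (intro power_mono) auto
  also have "\<dots> = Y ^ 2 * ?n ^ 2"
    by (simp add: power_mult_distrib)
  also have "\<dots> \<le> ?n ^ 2 * (\<Sum>b\<in>V. \<Sum>b'\<in>V. (c b b') ^ 2) * ?n ^ 2"
    using Y_sq by (intro mult_right_mono) auto
  finally show ?thesis
    unfolding c_def by (simp add: algebra_simps power4_eq_xxxx power2_eq_square)
qed

lemma amgm_pow4:
  fixes t l :: real
  assumes "l > 0"
  shows "t \<le> 3 * l / 4 + t ^ 4 / (4 * l ^ 3)"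
proof -
  have "t ^ 4 - 4 * l ^ 3 * t + 3 * l ^ 4 = (t - l) ^ 2 * ((t + l) ^ 2 + 2 * l ^ 2)"
    by (simp add: power2_eq_square power3_eq_cube power4_eq_xxxx algebra_simps)
  also have "\<dots> \<ge> 0"
    by simp
  finally have "4 * l ^ 3 * t \<le> 3 * l ^ 4 + t ^ 4"
    by simp
  then show ?thesis
    using assms by (simp add: field_simps power4_eq_xxxx power3_eq_cube)
qed

text \<open>
  AM-GM with a free parameter \<open>l\<close>: unlike the fourth root of \<^const>\<open>signed_c4\<close>, this bound is
  linear in \<^const>\<open>signed_c4\<close>, so it can be averaged over all graphs.
\<close>

definition discrepancy_bound :: "'a set \<Rightarrow> real \<Rightarrow> 'a set set \<Rightarrow> real" where
  "discrepancy_bound V l W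
     = real (card V) / 2 + (3 * l / 4 + real (card V) ^ 4 * signed_c4 V W / (4 * l ^ 3)) / 2"

lemma discrepancy_bound_nonneg:
  assumes "l > 0"
  shows "discrepancy_bound V l W \<ge> 0"
proof -
  have "signed_c4 V W \<ge> 0"
    unfolding signed_c4_def by (intro sum_nonneg) auto
  then show ?thesis
    unfolding discrepancy_bound_def using assms by simp
qed

lemma pair_count_nonadj_discrepancy:
  fixes l :: real
  assumes "finite V" "X \<subseteq> V" "l > 0"
  shows "\<bar>pair_count (nonadj W) X - real (card X) ^ 2 / 2\<bar> \<le> discrepancy_bound V l W"
proof -
  define S where "S = (\<Sum>a\<in>X. \<Sum>b\<in>X. sign_adj W a b)"
  define B where "B = 3 * l / 4 + real (card V) ^ 4 * signed_c4 V W / (4 * l ^ 3)"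
  have "\<bar>S\<bar> \<le> 3 * l / 4 + \<bar>S\<bar> ^ 4 / (4 * l ^ 3)"
    using assms(3) by (rule amgm_pow4)
  also have "\<bar>S\<bar> ^ 4 \<le> real (card V) ^ 4 * signed_c4 V W"
    unfolding S_def signed_c4_def power_abs[symmetric] using assms(1,2) by (simp add: sum_sum_pow4_le)
  finally have "\<bar>S\<bar> \<le> B"
    unfolding B_def using assms(3) by (simp add: divide_right_mono)
  moreover have "real (card X) \<le> real (card V)"
    using assms by (simp add: card_mono)
  moreover have "pair_count (nonadj W) X - real (card X) ^ 2 / 2 = - real (card X) / 2 - S / 2"
    unfolding S_def using assms by (simp add: pair_count_nonadj finite_subset field_simps)
  ultimately show ?thesis
    unfolding discrepancy_bound_def B_def[symmetric] by linarith
qed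

lemma sum_Pow_discrepancy_bound_le:
  fixes l :: real
  assumes "finite V" "l > 0"
  shows "(\<Sum>W\<in>Pow (pairs V). discrepancy_bound V l W)
           \<le> 2 ^ card (pairs V) * (real (card V) / 2 + 3 * l / 8 + real (card V) ^ 7 / (4 * l ^ 3))"
proof -
  let ?P = "Pow (pairs V)" and ?n = "real (card V)" and ?K = "(2::real) ^ card (pairs V)"
  have "discrepancy_bound V l W = (?n / 2 + 3 * l / 8) + ?n ^ 4 / (8 * l ^ 3) * signed_c4 V W" for W
    unfolding discrepancy_bound_def using assms(2) by (simp add: field_simps)
  then have "(\<Sum>W\<in>?P. discrepancy_bound V l W)
             = ?K * (?n / 2 + 3 * l / 8) + ?n ^ 4 / (8 * l ^ 3) * (\<Sum>W\<in>?P. signed_c4 V W)"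
    using assms(1) by (simp add: sum.distrib card_Pow finite_pairs flip: sum_distrib_left sum_divide_distrib)
  also have "\<dots> \<le> ?K * (?n / 2 + 3 * l / 8) + ?n ^ 4 / (8 * l ^ 3) * (?K * (2 * ?n ^ 3))"
    using sum_Pow_signed_c4_le[OF assms(1)] assms(2) by (intro add_left_mono mult_left_mono) auto
  also have "\<dots> = ?K * (?n / 2 + 3 * l / 8 + ?n ^ 7 / (4 * l ^ 3))"
    using assms(2) by (simp add: field_simps eval_nat_numeral)
  finally show ?thesis .
qed

section \<open>Counting quadruples\<close>

definition quad_pattern ::
    "('a \<Rightarrow> 'a \<Rightarrow> bool) \<Rightarrow> ('a \<Rightarrow> 'a \<Rightarrow> bool) \<Rightarrow> 'a \<Rightarrow> 'a \<Rightarrow> 'a \<Rightarrow> 'a \<Rightarrow> bool" where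
  "quad_pattern H F a b c d \<longleftrightarrow> H a b \<and> H c d \<and> F a c \<and> F a d \<and> F b c \<and> F b d"

definition quad_count :: "('a \<Rightarrow> 'a \<Rightarrow> bool) \<Rightarrow> ('a \<Rightarrow> 'a \<Rightarrow> bool) \<Rightarrow> 'a set \<Rightarrow> real" where
  "quad_count H F V = (\<Sum>a\<in>V. \<Sum>b\<in>V. \<Sum>c\<in>V. \<Sum>d\<in>V. of_bool (quad_pattern H F a b c d))"

lemma pair_count_filter:
  assumes "finite V"
  shows "pair_count H {a\<in>V. P a} = (\<Sum>a\<in>V. \<Sum>b\<in>V. of_bool (P a) * of_bool (P b) * of_bool (H a b))"
  unfolding pair_count_def sum.inter_filter[OF assms]
  by (intro sum.cong refl) (auto simp: sum_distrib_left intro!: sum.cong)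

lemma quad_count_eq_sum_pair_count:
  assumes "finite V"
  shows "quad_count H F V = (\<Sum>c\<in>V. \<Sum>d\<in>V. of_bool (H c d) * pair_count H {a\<in>V. F a c \<and> F a d})"
proof -
  have "quad_count H F V = (\<Sum>c\<in>V. \<Sum>d\<in>V. \<Sum>a\<in>V. \<Sum>b\<in>V. of_bool (quad_pattern H F a b c d))"
    unfolding quad_count_def by (rule sum_swap_pairs)
  also have "\<dots> = (\<Sum>c\<in>V. \<Sum>d\<in>V. \<Sum>a\<in>V. \<Sum>b\<in>V. of_bool (H c d) *
                    (of_bool (F a c \<and> F a d) * of_bool (F b c \<and> F b d) * of_bool (H a b)))"
    unfolding quad_pattern_def of_bool_conj[symmetric] by (intro sum.cong refl arg_cong[where f = of_bool]) blast
  also have "\<dots> = (\<Sum>c\<in>V. \<Sum>d\<in>V. of_bool (H c d) * pair_count H {a\<in>V. F a c \<and> F a d})"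
    using assms by (simp only: pair_count_filter sum_distrib_left)
  finally show ?thesis .
qed

lemma sum_card_common_eq:
  assumes "finite V"
  shows "(\<Sum>c\<in>V. \<Sum>d\<in>V. of_bool (H c d) * real (card {a\<in>V. F a c \<and> F a d}))
           = (\<Sum>a\<in>V. pair_count H {c\<in>V. F a c})"
proof -
  have "(\<Sum>c\<in>V. \<Sum>d\<in>V. of_bool (H c d) * real (card {a\<in>V. F a c \<and> F a d}))
        = (\<Sum>c\<in>V. \<Sum>d\<in>V. \<Sum>a\<in>V. of_bool (F a c \<and> F a d \<and> H c d))"
    using assms by (simp only: card_filter_eq_sum_of_bool sum_distrib_left of_bool_conj mult_ac)
  also have "\<dots> = (\<Sum>c\<in>V. \<Sum>a\<in>V. \<Sum>d\<in>V. of_bool (F a c \<and> F a d \<and> H c d))"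
    by (rule sum.cong[OF refl], rule sum.swap)
  also have "\<dots> = (\<Sum>a\<in>V. \<Sum>c\<in>V. \<Sum>d\<in>V. of_bool (F a c \<and> F a d \<and> H c d))"
    by (rule sum.swap)
  also have "\<dots> = (\<Sum>a\<in>V. pair_count H {c\<in>V. F a c})"
    using assms by (simp only: pair_count_filter of_bool_conj mult.assoc)
  finally show ?thesis .
qed

lemma max_diff_sq_ge:
  fixes P x :: real
  assumes "0 \<le> P" "0 \<le> x"
  shows "P ^ 2 - 2 * P * x \<le> max (P - x) 0 ^ 2"
proof (cases "x \<le> P")
  case True
  then show ?thesis
    by (simp add: power2_diff)
next
  case False
  then have "P * P \<le> P * (2 * x)"
    using assms by (intro mult_left_mono) auto
  then show ?thesis
    using False by (simp add: power2_eq_square)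
qed

lemma divide_add_ge:
  fixes u a d :: real
  assumes "0 \<le> u" "0 < a" "0 \<le> d"
  shows "u / a - d * u / a ^ 2 \<le> u / (a + d)"
proof -
  have "0 \<le> u * d * d"
    using assms by simp
  then show ?thesis
    using assms by (simp add: field_simps power2_eq_square)
qed

lemma quad_count_bound_arith:
  fixes n p z y \<Delta> :: real
  assumes n: "n > 0" and \<Delta>: "\<Delta> \<ge> 0" and p: "0 \<le> p" "p \<le> n ^ 2"
    and z: "z \<ge> 0" "z \<ge> p ^ 2 / (2 * n) - n * \<Delta>" and zy: "z ^ 2 \<le> y * (n ^ 2 / 2 + \<Delta>)"
  shows "y / 2 - \<Delta> * n ^ 2 \<ge> p ^ 4 / (4 * n ^ 4) - 5 * n ^ 2 * \<Delta> / 2"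
proof -
  define P where "P = p ^ 2 / (2 * n)"
  define L where "L = max (P - n * \<Delta>) 0"
  have "p ^ 2 \<le> (n ^ 2) ^ 2"
    using p by (intro power_mono) auto
  then have P: "0 \<le> P" "2 * P \<le> n ^ 3"
    unfolding P_def using n by (auto simp: field_simps power2_eq_square power3_eq_cube power4_eq_xxxx)
  have L: "0 \<le> L" "L \<le> z" "L \<le> P"
    unfolding L_def P_def using z P \<Delta> n by auto
  have "P ^ 2 - 2 * P * (n * \<Delta>) \<le> L ^ 2"
    unfolding L_def using P n \<Delta> by (intro max_diff_sq_ge) auto
  moreover have "2 * P * (n * \<Delta>) \<le> n ^ 3 * (n * \<Delta>)"
    using P n \<Delta> by (intro mult_right_mono) auto
  ultimately have "(P ^ 2 - n ^ 3 * (n * \<Delta>)) / n ^ 2 \<le> L ^ 2 / n ^ 2"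
    by (intro divide_right_mono) auto
  moreover have "(P ^ 2 - n ^ 3 * (n * \<Delta>)) / n ^ 2 = p ^ 4 / (4 * n ^ 4) - n ^ 2 * \<Delta>"
    unfolding P_def using n by (simp add: field_simps eval_nat_numeral)
  moreover have "(2 * L) ^ 2 \<le> (n ^ 3) ^ 2"
    using L P by (intro power_mono) auto
  then have "\<Delta> * (4 * L ^ 2) \<le> \<Delta> * n ^ 6"
    using \<Delta> by (intro mult_left_mono) (simp_all add: power_mult_distrib flip: power_mult)
  then have "2 * \<Delta> * (2 * L ^ 2) / (n ^ 2) ^ 2 \<le> \<Delta> * n ^ 2"
    using n by (simp add: field_simps eval_nat_numeral)
  moreover have "2 * L ^ 2 / n ^ 2 - 2 * \<Delta> * (2 * L ^ 2) / (n ^ 2) ^ 2 \<le> 2 * L ^ 2 / (n ^ 2 + 2 * \<Delta>)"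
    using n \<Delta> by (intro divide_add_ge) auto
  moreover have "2 * L ^ 2 / (n ^ 2 + 2 * \<Delta>) \<le> y"
  proof -
    have "L ^ 2 \<le> y * (n ^ 2 / 2 + \<Delta>)"
      using L zy power_mono[of L z 2] by linarith
    moreover have "0 < n ^ 2 + 2 * \<Delta>"
      using n \<Delta> by (simp add: add_pos_nonneg)
    ultimately show ?thesis
      by (simp add: pos_divide_le_eq algebra_simps)
  qed
  ultimately show ?thesis
    by (simp add: field_simps)
qed

lemma pair_count_nonneg: "0 \<le> pair_count R X"
  unfolding pair_count_def by (intro sum_nonneg) auto

lemma pair_count_le_card_sq: "pair_count R X \<le> real (card X) ^ 2"
proof -
  have "pair_count R X \<le> (\<Sum>a\<in>X. \<Sum>b\<in>X. 1)"
    unfolding pair_count_def by (intro sum_mono) simp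
  then show ?thesis
    by (simp add: power2_eq_square)
qed

lemma sum_card_common_ge:
  fixes H F :: "'a \<Rightarrow> 'a \<Rightarrow> bool" and \<Delta> :: real
  assumes V: "finite V" "V \<noteq> {}"
    and lower: "\<And>X. X \<subseteq> V \<Longrightarrow> real (card X) ^ 2 / 2 - \<Delta> \<le> pair_count H X"
  shows "pair_count F V ^ 2 / (2 * real (card V)) - real (card V) * \<Delta>
           \<le> (\<Sum>c\<in>V. \<Sum>d\<in>V. of_bool (H c d) * real (card {a\<in>V. F a c \<and> F a d}))"
proof -
  let ?n = "real (card V)"
  define q where "q a = real (card {c\<in>V. F a c})" for a
  have "pair_count F V = (\<Sum>a\<in>V. q a)"
    unfolding pair_count_def q_def using V(1) by (simp add: card_filter_eq_sum_of_bool)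
  then have "pair_count F V ^ 2 \<le> (\<Sum>a\<in>V. q a ^ 2) * ?n"
    by (simp add: sum_squared_le_sum_of_squares)
  then have "pair_count F V ^ 2 / (2 * ?n) \<le> (\<Sum>a\<in>V. q a ^ 2) / 2"
    using V by (simp add: field_simps card_gt_0_iff)
  also have "(\<Sum>a\<in>V. q a ^ 2) / 2 - ?n * \<Delta> = (\<Sum>a\<in>V. q a ^ 2 / 2 - \<Delta>)"
    by (simp add: sum_subtractf sum_divide_distrib)
  also have "\<dots> \<le> (\<Sum>a\<in>V. pair_count H {c\<in>V. F a c})"
    unfolding q_def by (intro sum_mono lower) auto
  also have "\<dots> = (\<Sum>c\<in>V. \<Sum>d\<in>V. of_bool (H c d) * real (card {a\<in>V. F a c \<and> F a d}))"
    using V(1) by (rule sum_card_common_eq[symmetric])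
  finally show ?thesis
    by simp
qed

lemma sum_of_bool_mult_sq_le:
  fixes H :: "'a \<Rightarrow> 'a \<Rightarrow> bool" and r :: "'a \<Rightarrow> 'a \<Rightarrow> real"
  shows "(\<Sum>c\<in>V. \<Sum>d\<in>V. of_bool (H c d) * r c d) ^ 2
           \<le> (\<Sum>c\<in>V. \<Sum>d\<in>V. of_bool (H c d) * r c d ^ 2) * pair_count H V"
proof -
  define h where "h c d = (of_bool (H c d) :: real)" for c d
  have idem: "h c d * r c d * h c d = h c d * r c d" "(h c d * r c d) ^ 2 = h c d * r c d ^ 2"
    "h c d ^ 2 = h c d" for c d
    unfolding h_def by (simp_all add: power_mult_distrib)
  have "(\<Sum>(c, d)\<in>V \<times> V. h c d * r c d) ^ 2
        \<le> (\<Sum>(c, d)\<in>V \<times> V. h c d * r c d ^ 2) * (\<Sum>(c, d)\<in>V \<times> V. h c d)"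
    using Cauchy_Schwarz_ineq_sum[of "\<lambda>(c, d). h c d * r c d" "\<lambda>(c, d). h c d" "V \<times> V"]
    by (simp only: case_prod_unfold idem)
  then show ?thesis
    unfolding h_def pair_count_def by (simp add: sum.cartesian_product)
qed

lemma quad_count_ge:
  fixes H F :: "'a \<Rightarrow> 'a \<Rightarrow> bool" and \<Delta> :: real
  assumes V: "finite V" "V \<noteq> {}" and \<Delta>: "\<Delta> \<ge> 0"
    and disc: "\<And>X. X \<subseteq> V \<Longrightarrow> \<bar>pair_count H X - real (card X) ^ 2 / 2\<bar> \<le> \<Delta>"
  shows "quad_count H F V \<ge> pair_count F V ^ 4 / (4 * real (card V) ^ 4) - 5 * real (card V) ^ 2 * \<Delta> / 2"
proof -
  let ?n = "real (card V)"
  define r where "r c d = real (card {a\<in>V. F a c \<and> F a d})" for c d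
  define z where "z = (\<Sum>c\<in>V. \<Sum>d\<in>V. of_bool (H c d) * r c d)"
  define y where "y = (\<Sum>c\<in>V. \<Sum>d\<in>V. of_bool (H c d) * r c d ^ 2)"
  have n: "?n > 0"
    using V by (simp add: card_gt_0_iff)
  have lower: "real (card X) ^ 2 / 2 - \<Delta> \<le> pair_count H X" if "X \<subseteq> V" for X
    using disc[OF that] by (simp add: abs_le_iff)
  have "quad_count H F V \<ge> (\<Sum>c\<in>V. \<Sum>d\<in>V. of_bool (H c d) * (r c d ^ 2 / 2 - \<Delta>))"
    unfolding quad_count_eq_sum_pair_count[OF V(1)] r_def
    by (intro sum_mono mult_left_mono lower) auto
  also have "(\<Sum>c\<in>V. \<Sum>d\<in>V. of_bool (H c d) * (r c d ^ 2 / 2 - \<Delta>)) = y / 2 - \<Delta> * pair_count H V"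
    unfolding y_def pair_count_def
    by (simp add: algebra_simps sum_subtractf sum_distrib_left sum_divide_distrib del: sum_of_bool_eq)
  finally have quad_ge: "quad_count H F V \<ge> y / 2 - \<Delta> * ?n ^ 2"
    using mult_left_mono[OF pair_count_le_card_sq[of H V] \<Delta>] by linarith
  have "z ^ 2 \<le> y * pair_count H V"
    unfolding z_def y_def by (rule sum_of_bool_mult_sq_le)
  also have "\<dots> \<le> y * (?n ^ 2 / 2 + \<Delta>)"
    using disc[of V] unfolding y_def by (intro mult_left_mono sum_nonneg) (auto simp: abs_le_iff)
  finally have "z ^ 2 \<le> y * (?n ^ 2 / 2 + \<Delta>)" .
  moreover have "0 \<le> z"
    unfolding z_def r_def by (intro sum_nonneg) auto
  moreover have "pair_count F V ^ 2 / (2 * ?n) - ?n * \<Delta> \<le> z"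
    unfolding z_def r_def by (rule sum_card_common_ge[OF V lower])
  ultimately have "y / 2 - \<Delta> * ?n ^ 2 \<ge> pair_count F V ^ 4 / (4 * ?n ^ 4) - 5 * ?n ^ 2 * \<Delta> / 2"
    using quad_count_bound_arith[OF n \<Delta> pair_count_nonneg pair_count_le_card_sq] by blast
  with quad_ge show ?thesis
    by linarith
qed

section \<open>Averaging over all graphs\<close>

definition addable :: "'a set set set \<Rightarrow> 'a set set \<Rightarrow> 'a \<Rightarrow> 'a \<Rightarrow> bool" where
  "addable A W a c \<longleftrightarrow> nonadj W a c \<and> insert {a, c} W \<in> A"

lemma sum_Pow_addable:
  assumes "finite V" "A \<subseteq> Pow (pairs V)" "a \<in> V" "c \<in> V"
  shows "(\<Sum>W\<in>Pow (pairs V). of_bool (addable A W a c)) = (\<Sum>G\<in>A. of_bool (adj G a c) :: real)"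
proof (cases "a = c")
  case False
  have "finite A"
    using assms by (meson finite_Pow_iff finite_pairs finite_subset)
  have "(\<Sum>W\<in>Pow (pairs V). of_bool (addable A W a c))
        = real (card {W\<in>Pow (pairs V). {a, c} \<notin> W \<and> insert {a, c} W \<in> A})"
    using assms False by (simp add: card_filter_eq_sum_of_bool finite_pairs addable_def nonadj_def Int_def)
  also have "\<dots> = real (card {G\<in>A. {a, c} \<in> G})"
    using assms False card_Pow_insert_mem[of "pairs V" "{a, c}" A] by (simp add: finite_pairs pair_mem_pairs)
  also have "\<dots> = (\<Sum>G\<in>A. of_bool (adj G a c))"
    using \<open>finite A\<close> False by (simp add: card_filter_eq_sum_of_bool adj_def)
  finally show ?thesis .
qed (simp add: addable_def nonadj_def adj_def)

lemma sum_Pow_pair_count_addable_ge: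
  assumes V: "finite V" and A: "A \<subseteq> Pow (pairs V)"
  shows "(\<Sum>W\<in>Pow (pairs V). pair_count (addable A W) V)
           \<ge> real (card A) * (real (card V) ^ 2 - real (card V)) / 2 - 2 ^ card (pairs V) * real (card V)"
proof -
  let ?P = "Pow (pairs V)" and ?n = "real (card V)"
  define dev where "dev G = (\<Sum>a\<in>V. \<Sum>c\<in>V. sign_adj G a c)" for G :: "nat set set"
  have "(\<Sum>W\<in>?P. pair_count (addable A W) V) = (\<Sum>a\<in>V. \<Sum>c\<in>V. \<Sum>W\<in>?P. of_bool (addable A W a c))"
    unfolding pair_count_def by (simp only: sum.swap[of _ ?P V])
  also have "\<dots> = (\<Sum>a\<in>V. \<Sum>c\<in>V. \<Sum>G\<in>A. of_bool (adj G a c))"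
    using V A by (intro sum.cong refl sum_Pow_addable)
  also have "\<dots> = (\<Sum>G\<in>A. pair_count (adj G) V)"
    unfolding pair_count_def by (simp only: sum.swap[of _ V A])
  also have "\<dots> = (\<Sum>G\<in>A. (?n ^ 2 - ?n + dev G) / 2)"
    using V by (simp add: pair_count_adj dev_def)
  also have "\<dots> = real (card A) * (?n ^ 2 - ?n) / 2 + (\<Sum>G\<in>A. dev G) / 2"
    by (simp add: sum.distrib add_divide_distrib sum_divide_distrib)
  finally have eq: "(\<Sum>W\<in>?P. pair_count (addable A W) V)
                      = real (card A) * (?n ^ 2 - ?n) / 2 + (\<Sum>G\<in>A. dev G) / 2" .
  have "- (\<Sum>G\<in>A. dev G) \<le> (\<Sum>G\<in>A. \<bar>dev G\<bar>)"
    by (metis abs_ge_minus_self order_trans sum_abs)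
  also have "\<dots> \<le> (\<Sum>G\<in>?P. \<bar>dev G\<bar>)"
    using V A by (intro sum_mono2) (auto simp: finite_pairs)
  also have "\<dots> \<le> 2 * (2 ^ card (pairs V) * ?n)"
    unfolding dev_def using V by (rule sum_Pow_abs_signed_sum_le)
  finally show ?thesis
    unfolding eq by linarith
qed

lemma sum_Pow_quad_count_ge:
  fixes l :: real
  assumes V: "finite V" "V \<noteq> {}" and l: "l > 0"
  shows "(\<Sum>W\<in>Pow (pairs V). quad_count (nonadj W) (addable A W) V)
           \<ge> (\<Sum>W\<in>Pow (pairs V). pair_count (addable A W) V ^ 4) / (4 * real (card V) ^ 4)
             - 5 * real (card V) ^ 2 / 2 * (2 ^ card (pairs V)
                 * (real (card V) / 2 + 3 * l / 8 + real (card V) ^ 7 / (4 * l ^ 3)))"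
proof -
  let ?P = "Pow (pairs V)" and ?n = "real (card V)"
  have "(\<Sum>W\<in>?P. pair_count (addable A W) V ^ 4) / (4 * ?n ^ 4)
          - 5 * ?n ^ 2 / 2 * (2 ^ card (pairs V) * (?n / 2 + 3 * l / 8 + ?n ^ 7 / (4 * l ^ 3)))
        \<le> (\<Sum>W\<in>?P. pair_count (addable A W) V ^ 4) / (4 * ?n ^ 4)
          - 5 * ?n ^ 2 / 2 * (\<Sum>W\<in>?P. discrepancy_bound V l W)"
    using sum_Pow_discrepancy_bound_le[OF V(1) l] by (intro diff_left_mono mult_left_mono) auto
  also have "\<dots> = (\<Sum>W\<in>?P. pair_count (addable A W) V ^ 4 / (4 * ?n ^ 4)
                     - 5 * ?n ^ 2 / 2 * discrepancy_bound V l W)"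
    by (simp add: sum_subtractf sum_divide_distrib sum_distrib_left)
  also have "\<dots> \<le> (\<Sum>W\<in>?P. quad_count (nonadj W) (addable A W) V)"
  proof (rule sum_mono)
    fix W
    show "pair_count (addable A W) V ^ 4 / (4 * ?n ^ 4) - 5 * ?n ^ 2 / 2 * discrepancy_bound V l W
          \<le> quad_count (nonadj W) (addable A W) V"
      using quad_count_ge[where F = "addable A W", OF V discrepancy_bound_nonneg[OF l]
          pair_count_nonadj_discrepancy[OF V(1) _ l]]
      by (simp add: mult.assoc)
  qed
  finally show ?thesis .
qed

lemma sqrt_sqrt_pow4:
  fixes x :: real
  assumes "x \<ge> 0"
  shows "sqrt (sqrt x) ^ 4 = x"
proof -
  have "sqrt (sqrt x) ^ 4 = (sqrt (sqrt x) ^ 2) ^ 2"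
    by simp
  then show ?thesis
    using assms by simp
qed

lemma pow4_perturbation_bound:
  fixes m t N :: real
  assumes m: "0 \<le> m" "m \<le> 1" and N: "N \<ge> 2" and t: "t \<ge> 0" "t \<ge> m / 2 - 3 / (2 * N)"
  shows "16 * t ^ 4 \<ge> m ^ 4 - 12 / N"
proof (cases "m / 2 \<le> 3 / (2 * N)")
  case True
  then have "m \<le> 3 / N"
    using N by (simp add: field_simps)
  then have "m ^ 4 \<le> 81 / N ^ 4"
    using power_mono[of m "3 / N" 4] m by (simp add: power_divide)
  also have "81 / N ^ 4 \<le> 12 / N"
  proof -
    have "81 \<le> 12 * N ^ 3"
      using power_mono[of 2 N 3] N by simp
    then show ?thesis
      using N by (simp add: field_simps power3_eq_cube power4_eq_xxxx)
  qed
  moreover have "0 \<le> t ^ 4"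
    using t by simp
  ultimately show ?thesis
    by linarith
next
  case False
  define a where "a = m / 2"
  define b where "b = a - 3 / (2 * N)"
  have ab: "0 \<le> b" "b \<le> a" "b \<le> t"
    using False N t unfolding a_def b_def by auto
  have "a ^ 4 - b ^ 4 = (a - b) * (a ^ 3 + a ^ 2 * b + a * b ^ 2 + b ^ 3)"
    by (simp add: power2_eq_square power3_eq_cube power4_eq_xxxx algebra_simps)
  also have "\<dots> \<le> (a - b) * (4 * a ^ 3)"
  proof (intro mult_left_mono)
    have "a ^ 2 * b \<le> a ^ 2 * a" "a * b ^ 2 \<le> a * a ^ 2" "b ^ 3 \<le> a ^ 3"
      using ab by (auto intro!: mult_left_mono power_mono)
    then show "a ^ 3 + a ^ 2 * b + a * b ^ 2 + b ^ 3 \<le> 4 * a ^ 3"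
      by (simp add: power2_eq_square power3_eq_cube)
  qed (use ab in simp)
  also have "\<dots> = 3 * m ^ 3 / (4 * N)"
    unfolding a_def b_def using N by (simp add: field_simps power3_eq_cube)
  also have "\<dots> \<le> 3 / (4 * N)"
    using m N by (simp add: divide_right_mono power_le_one)
  finally have "a ^ 4 - 3 / (4 * N) \<le> b ^ 4"
    by simp
  also have "\<dots> \<le> t ^ 4"
    using ab by (intro power_mono) auto
  finally show ?thesis
    unfolding a_def using N by (simp add: field_simps power_divide)
qed

lemma pattern_density_arith:
  fixes N K r m s g :: real
  assumes N: "N \<ge> 2" and K: "K > 0" and r: "r > 0" "r ^ 4 = N" and m: "0 \<le> m" "m \<le> 1"
    and s: "0 \<le> s" "m * (N ^ 2 - N) / 2 - N \<le> s"
    and g: "K * s ^ 4 / (4 * N ^ 4) - 5 * N ^ 2 / 2 * (K * (N / 2 + 5 * r ^ 7 / 8)) \<le> N ^ 4 * g"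
  shows "m ^ 4 - 92 / N - 100 / r \<le> 64 * g / K"
proof -
  have "m / 2 - 3 / (2 * N) \<le> s / N ^ 2"
  proof -
    have "m / (2 * N) \<le> 1 / (2 * N)"
      using m N by (simp add: divide_right_mono)
    moreover have "(m * (N ^ 2 - N) / 2 - N) / N ^ 2 = m / 2 - m / (2 * N) - 1 / N"
      using N by (simp add: field_simps power2_eq_square)
    moreover have "(m * (N ^ 2 - N) / 2 - N) / N ^ 2 \<le> s / N ^ 2"
      using s by (simp add: divide_right_mono)
    moreover have "3 / (2 * N) = 1 / (2 * N) + 1 / N"
      using N by (simp add: field_simps)
    ultimately show ?thesis
      by linarith
  qed
  then have "m ^ 4 - 12 / N \<le> 16 * (s / N ^ 2) ^ 4"
    using pow4_perturbation_bound[OF m N] s by simp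
  also have "16 * (s / N ^ 2) ^ 4 - 80 / N - 100 / r \<le> 64 * g / K"
  proof -
    have "N ^ 2 = r ^ 7 * r"
      unfolding r(2)[symmetric] by (simp add: eval_nat_numeral mult_ac)
    then have "64 * (K * s ^ 4 / (4 * N ^ 4) - 5 * N ^ 2 / 2 * (K * (N / 2 + 5 * r ^ 7 / 8))) / (K * N ^ 4)
          = 16 * (s / N ^ 2) ^ 4 - 80 / N - 100 / r"
      using K N r by (simp add: field_simps power_divide eval_nat_numeral)
    moreover have "64 * (K * s ^ 4 / (4 * N ^ 4) - 5 * N ^ 2 / 2 * (K * (N / 2 + 5 * r ^ 7 / 8))) / (K * N ^ 4)
                   \<le> 64 * (N ^ 4 * g) / (K * N ^ 4)"
      using g K N by (intro divide_right_mono mult_left_mono) auto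
    ultimately show ?thesis
      using K N by simp
  qed
  finally show ?thesis
    by simp
qed

lemma error_terms_le:
  fixes n :: real
  assumes n: "n \<ge> 2 ^ 32"
  shows "92 / n + 100 / sqrt (sqrt n) \<le> 21 * sqrt 2 / sqrt (log 2 n)"
proof -
  define r where "r = sqrt (sqrt n)"
  have "(1::real) < 2 ^ 32"
    by simp
  then have n_pos: "n > 1"
    using n by linarith
  have r4: "r ^ 4 = n"
    unfolding r_def using n_pos by (simp add: sqrt_sqrt_pow4)
  have "sqrt (sqrt ((2 ^ 8) ^ 4)) \<le> r"
    unfolding r_def using n by (intro real_sqrt_le_mono) simp
  then have r: "r \<ge> 256"
    by (simp add: power4_eq_xxxx flip: power2_eq_square)
  have "92 * r \<le> r ^ 3 * r"
    using r power_mono[of 256 r 3] by (intro mult_right_mono) auto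
  then have first: "92 / n \<le> 1 / r"
    unfolding r4[symmetric] using r by (simp add: field_simps power3_eq_cube power4_eq_xxxx)
  have "ln (2::real) \<ge> 1 / 2"
    using ln_le_minus_one[of "1 / 2 :: real"] by (simp add: ln_div)
  then have "8 * r * (1 / 2) \<le> 8 * r * ln 2"
    using r by (intro mult_left_mono) auto
  moreover have "ln n \<le> 4 * r"
    using ln_le_minus_one[of r] r r4 by (simp flip: r4 add: ln_realpow)
  ultimately have "log 2 n \<le> 8 * r"
    unfolding log_def by (simp add: divide_le_eq)
  then have "10201 * log 2 n \<le> 882 * r * r"
    using r mult_right_mono[of 81608 "882 * r" r] by linarith
  then have "10201 * log 2 n \<le> 882 * r ^ 2"
    by (simp add: power2_eq_square)
  then have "sqrt (101 ^ 2 * log 2 n) \<le> sqrt ((21 * r) ^ 2 * 2)"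
    by (intro real_sqrt_le_mono) (simp add: power_mult_distrib)
  then have "101 * sqrt (log 2 n) \<le> 21 * sqrt 2 * r"
    unfolding real_sqrt_mult real_sqrt_abs using r by (simp add: mult_ac)
  moreover have "log 2 n > 0"
    using n_pos by simp
  ultimately have "101 / r \<le> 21 * sqrt 2 / sqrt (log 2 n)"
    using r by (simp add: field_simps)
  with first show ?thesis
    unfolding r_def by simp
qed

section \<open>Isomorphism invariance\<close>

lemma edges_eq_pairs: "edges n = pairs {1..n}"
  unfolding edges_def pairs_def ..

lemma card_pairs: "finite U \<Longrightarrow> card (pairs U) = card U choose 2"
  unfolding pairs_def by (simp add: n_subsets)

lemma pairs_4:
  assumes "distinct [i, j, k, l]"
  shows "pairs {i, j, k, l} = {{i, j}, {i, k}, {i, l}, {j, k}, {j, l}, {k, l}}"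
proof
  show "pairs {i, j, k, l} \<subseteq> {{i, j}, {i, k}, {i, l}, {j, k}, {j, l}, {k, l}}"
  proof
    fix e assume "e \<in> pairs {i, j, k, l}"
    then obtain x y where "e = {x, y}" "x \<noteq> y" "x \<in> {i, j, k, l}" "y \<in> {i, j, k, l}"
      unfolding pairs_def by (auto simp: card_2_iff)
    then show "e \<in> {{i, j}, {i, k}, {i, l}, {j, k}, {j, l}, {k, l}}"
      by (auto simp: insert_commute)
  qed
qed (use assms in \<open>auto simp: pair_mem_pairs\<close>)

definition pattern_graphs :: "nat \<Rightarrow> nat set set set \<Rightarrow> nat \<Rightarrow> nat \<Rightarrow> nat \<Rightarrow> nat \<Rightarrow> nat set set set" where
  "pattern_graphs n A a b c d = {W\<in>Pow (edges n). quad_pattern (nonadj W) (addable A W) a b c d}"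

lemma unif_prob_eq_pattern_graphs:
  assumes d: "distinct [i, j, k, l]" and U: "{i, j, k, l} \<subseteq> {1..n}"
  shows "unif_prob (edges n - pairs {i, j, k, l})
           (\<lambda>W. insert {i, k} W \<in> A \<and> insert {i, l} W \<in> A \<and> insert {j, k} W \<in> A \<and> insert {j, l} W \<in> A)
         = 64 * real (card (pattern_graphs n A i j k l)) / 2 ^ card (edges n)"
proof -
  let ?E = "edges n" and ?U = "pairs {i, j, k, l}"
  have sub: "?U \<subseteq> ?E"
    using U unfolding edges_eq_pairs pairs_def by auto
  have "card ?U = 6"
    using d by (simp add: card_pairs numeral_eq_Suc)
  moreover have "finite ?E"
    by (simp add: edges_eq_pairs finite_pairs)
  ultimately have "card ?E = card (?E - ?U) + 6"
    using sub card_mono[of ?E ?U] by (simp add: card_Diff_subset finite_subset)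
  then have "(2::real) ^ card ?E = 2 ^ card (?E - ?U) * 64"
    by (simp add: power_add)
  moreover have "{W. W \<subseteq> ?E - ?U \<and> insert {i, k} W \<in> A \<and> insert {i, l} W \<in> A \<and>
                    insert {j, k} W \<in> A \<and> insert {j, l} W \<in> A} = pattern_graphs n A i j k l"
    unfolding pattern_graphs_def pairs_4[OF d]
    by (intro Collect_cong) (use d in \<open>simp add: subset_Diff_insert quad_pattern_def addable_def nonadj_def; blast\<close>)
  ultimately show ?thesis
    unfolding unif_prob_def by simp
qed

definition relabel :: "('a \<Rightarrow> 'b) \<Rightarrow> 'a set set \<Rightarrow> 'b set set" where
  "relabel \<pi> W = (\<lambda>e. \<pi> ` e) ` W"

lemma pair_mem_relabel:
  assumes "inj_on \<pi> V" "W \<subseteq> Pow V" "x \<in> V" "y \<in> V"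
  shows "{\<pi> x, \<pi> y} \<in> relabel \<pi> W \<longleftrightarrow> {x, y} \<in> W"
proof
  assume "{\<pi> x, \<pi> y} \<in> relabel \<pi> W"
  then obtain e where e: "e \<in> W" "\<pi> ` e = \<pi> ` {x, y}"
    unfolding relabel_def by auto
  moreover have "e \<in> Pow V" "{x, y} \<in> Pow V"
    using e(1) assms(2-4) by auto
  ultimately have "e = {x, y}"
    using inj_onD[OF inj_on_image_Pow[OF assms(1)]] by blast
  with e(1) show "{x, y} \<in> W"
    by simp
next
  assume "{x, y} \<in> W"
  then show "{\<pi> x, \<pi> y} \<in> relabel \<pi> W"
    unfolding relabel_def by (rule rev_image_eqI) simp
qed

lemma relabel_pairs:
  assumes "bij_betw \<pi> V V" "W \<subseteq> pairs V"
  shows "relabel \<pi> W \<subseteq> pairs V"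
proof
  fix e' assume "e' \<in> relabel \<pi> W"
  then obtain e where "e \<in> W" "e' = \<pi> ` e"
    unfolding relabel_def by auto
  moreover obtain x y where "e = {x, y}" "x \<noteq> y"
    using \<open>e \<in> W\<close> assms(2) unfolding pairs_def by (auto simp: card_2_iff)
  ultimately have "e' = {\<pi> x, \<pi> y}" "x \<in> V" "y \<in> V" "x \<noteq> y"
    using assms(2) by (auto simp: pair_mem_pairs)
  moreover have "\<pi> x \<noteq> \<pi> y"
    using calculation(2-4) bij_betw_imp_inj_on[OF assms(1)] by (simp add: inj_on_eq_iff)
  moreover have "\<pi> x \<in> V" "\<pi> y \<in> V"
    using calculation(2,3) assms(1) by (simp_all add: bij_betwE)
  ultimately show "e' \<in> pairs V"
    by (simp add: pair_mem_pairs)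
qed

lemma inj_on_relabel:
  assumes "inj_on \<pi> V"
  shows "inj_on (relabel \<pi>) (Pow (pairs V))"
proof -
  have "inj_on (image \<pi>) (pairs V)"
    using inj_on_image_Pow[OF assms] by (rule inj_on_subset) (auto simp: pairs_def)
  then show ?thesis
    unfolding relabel_def by (rule inj_on_image_Pow)
qed

lemma quad_pattern_relabel:
  assumes iso: "iso_invariant n A" and \<pi>: "bij_betw \<pi> {1..n} {1..n}" and W: "W \<subseteq> edges n"
    and V: "a \<in> {1..n}" "b \<in> {1..n}" "c \<in> {1..n}" "d \<in> {1..n}"
  shows "quad_pattern (nonadj (relabel \<pi> W)) (addable A (relabel \<pi> W)) (\<pi> a) (\<pi> b) (\<pi> c) (\<pi> d)
         \<longleftrightarrow> quad_pattern (nonadj W) (addable A W) a b c d"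
proof -
  have inj: "inj_on \<pi> {1..n}"
    using \<pi> by (rule bij_betw_imp_inj_on)
  have W_Pow: "W \<subseteq> Pow {1..n}"
    using W by (auto simp: edges_def)
  have nonadj: "nonadj (relabel \<pi> W) (\<pi> x) (\<pi> y) \<longleftrightarrow> nonadj W x y" if "x \<in> {1..n}" "y \<in> {1..n}" for x y
    using pair_mem_relabel[OF inj W_Pow that] inj that by (auto simp: nonadj_def inj_on_eq_iff)
  have addable: "addable A (relabel \<pi> W) (\<pi> x) (\<pi> y) \<longleftrightarrow> addable A W x y"
    if "x \<in> {1..n}" "y \<in> {1..n}" for x y
  proof (cases "x = y")
    case False
    have "insert {x, y} W \<subseteq> edges n"
      using W False that by (simp add: edges_eq_pairs pair_mem_pairs)
    then have "relabel \<pi> (insert {x, y} W) \<in> A \<longleftrightarrow> insert {x, y} W \<in> A"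
      using iso \<pi> unfolding iso_invariant_def relabel_def by blast
    moreover have "relabel \<pi> (insert {x, y} W) = insert {\<pi> x, \<pi> y} (relabel \<pi> W)"
      by (simp add: relabel_def)
    ultimately show ?thesis
      using nonadj[OF that] by (simp add: addable_def)
  qed (simp add: addable_def nonadj_def)
  show ?thesis
    unfolding quad_pattern_def using nonadj addable V by simp
qed

lemma card_pattern_graphs_le:
  assumes iso: "iso_invariant n A" and \<pi>: "bij_betw \<pi> {1..n} {1..n}"
    and V: "a \<in> {1..n}" "b \<in> {1..n}" "c \<in> {1..n}" "d \<in> {1..n}"
  shows "card (pattern_graphs n A a b c d) \<le> card (pattern_graphs n A (\<pi> a) (\<pi> b) (\<pi> c) (\<pi> d))"
proof (rule card_inj_on_le)
  show "inj_on (relabel \<pi>) (pattern_graphs n A a b c d)"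
    using inj_on_relabel[OF bij_betw_imp_inj_on[OF \<pi>]]
    by (rule inj_on_subset) (auto simp: pattern_graphs_def edges_eq_pairs)
  show "relabel \<pi> ` pattern_graphs n A a b c d \<subseteq> pattern_graphs n A (\<pi> a) (\<pi> b) (\<pi> c) (\<pi> d)"
    using relabel_pairs[OF \<pi>] quad_pattern_relabel[OF iso \<pi> _ V]
    by (auto simp: pattern_graphs_def edges_eq_pairs)
  show "finite (pattern_graphs n A (\<pi> a) (\<pi> b) (\<pi> c) (\<pi> d))"
    unfolding pattern_graphs_def by (simp add: edges_eq_pairs finite_pairs)
qed

lemma exists_bij_betw_4:
  assumes "finite V" "distinct [a, b, c, d]" "distinct [a', b', c', d']"
    and "{a, b, c, d} \<subseteq> V" "{a', b', c', d'} \<subseteq> V"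
  obtains \<pi> where "bij_betw \<pi> V V" "\<pi> a = a'" "\<pi> b = b'" "\<pi> c = c'" "\<pi> d = d'"
proof -
  let ?S = "{a, b, c, d}" and ?S' = "{a', b', c', d'}"
  have "card (V - ?S) = card (V - ?S')"
    using assms by (simp add: card_Diff_subset finite_subset)
  then obtain h where h: "bij_betw h (V - ?S) (V - ?S')"
    using assms(1) finite_same_card_bij by blast
  define \<pi> where "\<pi> x = (if x = a then a' else if x = b then b' else if x = c then c' else if x = d then d' else h x)"
    for x
  have "bij_betw \<pi> ?S ?S'"
    using assms(2,3) by (intro bij_betw_imageI) (auto simp: inj_on_def \<pi>_def)
  moreover have "bij_betw \<pi> (V - ?S) (V - ?S')"
    using h by (rule bij_betw_cong[THEN iffD1, rotated]) (auto simp: \<pi>_def)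
  ultimately have "bij_betw \<pi> (?S \<union> (V - ?S)) (?S' \<union> (V - ?S'))"
    by (rule bij_betw_combine) auto
  moreover have "?S \<union> (V - ?S) = V" "?S' \<union> (V - ?S') = V"
    using assms(4,5) by auto
  ultimately have "bij_betw \<pi> V V"
    by simp
  moreover have "\<pi> a = a'" "\<pi> b = b'" "\<pi> c = c'" "\<pi> d = d'"
    using assms(2) by (auto simp: \<pi>_def)
  ultimately show ?thesis
    using that by blast
qed

lemma card_pattern_graphs_eq:
  assumes iso: "iso_invariant n A" and d: "distinct [a, b, c, d]" "distinct [a', b', c', d']"
    and V: "{a, b, c, d} \<subseteq> {1..n}" "{a', b', c', d'} \<subseteq> {1..n}"
  shows "card (pattern_graphs n A a b c d) = card (pattern_graphs n A a' b' c' d')"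
proof (rule antisym)
  obtain \<pi> where "bij_betw \<pi> {1..n} {1..n}" "\<pi> a = a'" "\<pi> b = b'" "\<pi> c = c'" "\<pi> d = d'"
    using exists_bij_betw_4[OF _ d V] by blast
  then show "card (pattern_graphs n A a b c d) \<le> card (pattern_graphs n A a' b' c' d')"
    using card_pattern_graphs_le[OF iso, of \<pi> a b c d] V by auto
  obtain \<sigma> where "bij_betw \<sigma> {1..n} {1..n}" "\<sigma> a' = a" "\<sigma> b' = b" "\<sigma> c' = c" "\<sigma> d' = d"
    using exists_bij_betw_4[OF _ d(2,1) V(2,1)] by blast
  then show "card (pattern_graphs n A a' b' c' d') \<le> card (pattern_graphs n A a b c d)"
    using card_pattern_graphs_le[OF iso, of \<sigma> a' b' c' d'] V by auto
qed

lemma sum_Pow_quad_count_le: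
  assumes iso: "iso_invariant n A" and n: "n \<ge> 4"
  shows "(\<Sum>W\<in>Pow (edges n). quad_count (nonadj W) (addable A W) {1..n})
           \<le> real n ^ 4 * real (card (pattern_graphs n A 1 2 3 4))"
proof -
  let ?V = "{1..n}" and ?P = "Pow (edges n)"
  have "(\<Sum>W\<in>?P. quad_count (nonadj W) (addable A W) ?V)
        = (\<Sum>a\<in>?V. \<Sum>b\<in>?V. \<Sum>c\<in>?V. \<Sum>d\<in>?V. real (card (pattern_graphs n A a b c d)))"
  proof -
    have "real (card (pattern_graphs n A a b c d)) = (\<Sum>W\<in>?P. of_bool (quad_pattern (nonadj W) (addable A W) a b c d))"
      for a b c d
      unfolding pattern_graphs_def by (simp only: card_filter_eq_sum_of_bool edges_eq_pairs finite_pairs finite_atLeastAtMost finite_Pow_iff)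
    then show ?thesis
      unfolding quad_count_def by (simp only: sum.swap[of _ ?P])
  qed
  also have "\<dots> \<le> (\<Sum>a\<in>?V. \<Sum>b\<in>?V. \<Sum>c\<in>?V. \<Sum>d\<in>?V. real (card (pattern_graphs n A 1 2 3 4)))"
  proof (intro sum_mono)
    fix a b c d assume "a \<in> ?V" "b \<in> ?V" "c \<in> ?V" "d \<in> ?V"
    show "real (card (pattern_graphs n A a b c d)) \<le> real (card (pattern_graphs n A 1 2 3 4))"
    proof (cases "distinct [a, b, c, d]")
      case True
      then show ?thesis
        using card_pattern_graphs_eq[OF iso True, of 1 2 3 4] n \<open>a \<in> ?V\<close> \<open>b \<in> ?V\<close> \<open>c \<in> ?V\<close> \<open>d \<in> ?V\<close>
        by simp
    next
      case False
      then have "pattern_graphs n A a b c d = {}"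
        by (auto simp: pattern_graphs_def quad_pattern_def addable_def nonadj_def)
      then show ?thesis
        by simp
    qed
  qed
  also have "\<dots> = real n ^ 4 * real (card (pattern_graphs n A 1 2 3 4))"
    by (simp add: power4_eq_xxxx)
  finally show ?thesis .
qed

lemma sum_Pow_pair_count_addable_pow4_ge:
  assumes V: "finite V" and A: "A \<subseteq> Pow (pairs V)"
  defines "K \<equiv> (2::real) ^ card (pairs V)"
  shows "K * max (real (card A) / K * (real (card V) ^ 2 - real (card V)) / 2 - real (card V)) 0 ^ 4
           \<le> (\<Sum>W\<in>Pow (pairs V). pair_count (addable A W) V ^ 4)"
proof -
  let ?P = "Pow (pairs V)" and ?n = "real (card V)"
  define s where "s = max (real (card A) / K * (?n ^ 2 - ?n) / 2 - ?n) 0"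
  have "K * (real (card A) / K * (?n ^ 2 - ?n) / 2 - ?n) = real (card A) * (?n ^ 2 - ?n) / 2 - K * ?n"
    unfolding K_def by (simp add: right_diff_distrib)
  also have "\<dots> \<le> (\<Sum>W\<in>?P. pair_count (addable A W) V)"
    using sum_Pow_pair_count_addable_ge[OF V A] unfolding K_def by simp
  finally have "K * (real (card A) / K * (?n ^ 2 - ?n) / 2 - ?n) \<le> (\<Sum>W\<in>?P. pair_count (addable A W) V)" .
  moreover have "0 \<le> (\<Sum>W\<in>?P. pair_count (addable A W) V)"
    by (intro sum_nonneg pair_count_nonneg)
  ultimately have "K * s \<le> (\<Sum>W\<in>?P. pair_count (addable A W) V)"
    unfolding s_def by (simp add: max_def)
  moreover have card_P: "real (card ?P) = K"
    unfolding K_def using V by (simp add: card_Pow finite_pairs)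
  ultimately have "real (card ?P) * s ^ 4 \<le> (\<Sum>W\<in>?P. pair_count (addable A W) V ^ 4)"
    using V by (intro sum_pow4_ge) (simp_all add: finite_pairs s_def)
  then show ?thesis
    unfolding card_P s_def .
qed

lemma pattern_probability_ge:
  fixes n :: nat and A :: "nat set set set"
  assumes n: "n \<ge> 4" and A: "A \<subseteq> Pow (edges n)" and iso: "iso_invariant n A"
  shows "mu n A ^ 4 - 92 / real n - 100 / sqrt (sqrt (real n))
           \<le> 64 * real (card (pattern_graphs n A 1 2 3 4)) / 2 ^ card (edges n)"
proof -
  let ?V = "{1..n}" and ?P = "Pow (edges n)" and ?K = "(2::real) ^ card (edges n)" and ?N = "real n"
  define r where "r = sqrt (sqrt ?N)"
  define s where "s = max (mu n A * (?N ^ 2 - ?N) / 2 - ?N) 0"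
  have N: "?N \<ge> 2"
    using n by simp
  have r: "r > 0" "r ^ 4 = ?N"
    unfolding r_def using N by (simp_all add: sqrt_sqrt_pow4)
  have V: "finite ?V" "?V \<noteq> {}"
    using n by auto
  have mu: "mu n A = real (card A) / ?K"
    using A unfolding mu_def by (simp add: Int_absorb2)
  have "card A \<le> card ?P"
    using A by (intro card_mono) (simp_all add: edges_eq_pairs finite_pairs)
  then have mu_le: "0 \<le> mu n A" "mu n A \<le> 1"
    unfolding mu by (simp_all add: card_Pow edges_eq_pairs finite_pairs)
  have "?N ^ 7 / (4 * (r ^ 7) ^ 3) = r ^ 7 / 4"
    unfolding r(2)[symmetric] using r by (simp add: field_simps eval_nat_numeral)
  then have bracket: "?N / 2 + 3 * r ^ 7 / 8 + ?N ^ 7 / (4 * (r ^ 7) ^ 3) = ?N / 2 + 5 * r ^ 7 / 8"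
    by simp
  have "?K * s ^ 4 / (4 * ?N ^ 4) \<le> (\<Sum>W\<in>?P. pair_count (addable A W) ?V ^ 4) / (4 * ?N ^ 4)"
    using sum_Pow_pair_count_addable_pow4_ge[of ?V A] A unfolding s_def mu
    by (simp add: edges_eq_pairs divide_right_mono)
  then have "?K * s ^ 4 / (4 * ?N ^ 4) - 5 * ?N ^ 2 / 2 * (?K * (?N / 2 + 5 * r ^ 7 / 8))
             \<le> (\<Sum>W\<in>?P. pair_count (addable A W) ?V ^ 4) / (4 * ?N ^ 4)
                 - 5 * ?N ^ 2 / 2 * (?K * (?N / 2 + 3 * r ^ 7 / 8 + ?N ^ 7 / (4 * (r ^ 7) ^ 3)))"
    unfolding bracket by linarith
  also have "\<dots> \<le> (\<Sum>W\<in>?P. quad_count (nonadj W) (addable A W) ?V)"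
    \<comment> \<open>\<open>l = n^(7/4)\<close> balances the terms \<open>3 l / 8\<close> and \<open>n^7 / (4 l^3)\<close>.\<close>
    using sum_Pow_quad_count_ge[OF V, of "r ^ 7" A] r by (simp add: edges_eq_pairs)
  also have "\<dots> \<le> ?N ^ 4 * real (card (pattern_graphs n A 1 2 3 4))"
    using sum_Pow_quad_count_le[OF iso n] .
  finally have "?K * s ^ 4 / (4 * ?N ^ 4) - 5 * ?N ^ 2 / 2 * (?K * (?N / 2 + 5 * r ^ 7 / 8))
                \<le> ?N ^ 4 * real (card (pattern_graphs n A 1 2 3 4))" .
  moreover have "0 \<le> s" "mu n A * (?N ^ 2 - ?N) / 2 - ?N \<le> s"
    unfolding s_def by auto
  ultimately show ?thesis
    unfolding r_def[symmetric] using pattern_density_arith[OF N _ r mu_le] by simp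
qed

theorem proposition9p1:
  fixes n :: nat and A :: "nat set set set"
  assumes "n \<ge> 2 ^ 32"
    and "A \<subseteq> Pow (edges n)"
    and "iso_invariant n A"
  shows "\<exists>\<gamma>::real. \<gamma> \<ge> 0 \<and>
           \<gamma> \<ge> mu n A ^ 4 - 21 * sqrt 2 / sqrt (log 2 (real n)) \<and>
           (\<forall>i j k l. 1 \<le> i \<and> i < j \<and> j < k \<and> k < l \<and> l \<le> n \<longrightarrow>
              unif_prob (edges n - pairs {i, j, k, l})
                (\<lambda>W. insert {i, k} W \<in> A \<and> insert {i, l} W \<in> A \<and>
                     insert {j, k} W \<in> A \<and> insert {j, l} W \<in> A) = \<gamma>)"
proof -
  define \<gamma> where "\<gamma> = 64 * real (card (pattern_graphs n A 1 2 3 4)) / 2 ^ card (edges n)"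
  have n: "n \<ge> 4" "real n \<ge> 2 ^ 32"
    using assms(1) by (simp_all add: order.trans[OF _ assms(1)] flip: of_nat_le_iff)
  show ?thesis
  proof (intro exI[of _ \<gamma>] conjI allI impI)
    show "\<gamma> \<ge> 0"
      unfolding \<gamma>_def by simp
    show "\<gamma> \<ge> mu n A ^ 4 - 21 * sqrt 2 / sqrt (log 2 (real n))"
      using pattern_probability_ge[OF n(1) assms(2,3)] error_terms_le[OF n(2)]
      unfolding \<gamma>_def by linarith
    fix i j k l
    assume "1 \<le> i \<and> i < j \<and> j < k \<and> k < l \<and> l \<le> n"
    then have "distinct [i, j, k, l]" "{i, j, k, l} \<subseteq> {1..n}"
      by auto
    then show "unif_prob (edges n - pairs {i, j, k, l})
                 (\<lambda>W. insert {i, k} W \<in> A \<and> insert {i, l} W \<in> A \<and>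
                      insert {j, k} W \<in> A \<and> insert {j, l} W \<in> A) = \<gamma>"
      using card_pattern_graphs_eq[OF assms(3), of i j k l 1 2 3 4] n(1)
      unfolding \<gamma>_def by (simp add: unif_prob_eq_pattern_graphs)
  qed
qed

end
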